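(* Let $\theta$ be an angle and let $\mathcal P=(p_1,\dots,p_k)$ be a $\theta$-path from $p_1$ to $p_k$. Then $\mathcal P$ is increasing-chord, i.e., it is self-approaching both from $p_1$ to $p_k$ and from $p_k$ to $p_1$.
   Context: The slope of a segment $\overline{uv}$ is the angle of the clockwise rotation around $u$ that brings $\overline{uv}$ to coincide with the positive $x$-axis; slopes are defined modulo $360^\circ$. A segment $\overline{uv}$ (directed from $u$ to $v$) is a $\theta$-edge if its slope lies in $[\theta-45^\circ,\theta+45^\circ]$ (modulo $360^\circ$). A geometric path $(p_1,\dots,p_k)$ is a $\theta$-path from $p_1$ to $p_k$ if $\overline{p_ip_{i+1}}$ is a $\theta$-edge for every $1\le i\le k-1$. A geometric path $(v_1,\dots,v_k)$ is self-approaching from $v_1$ to $v_k$ if for every three distinct points $a,b,c$ appearing in this order along the path from $v_1$ to $v_k$ (possibly interior to edges) $|\overline{bc}|<|\overline{ac}|$, where $|\cdot|$ is Euclidean length. *)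

theory Defs
  imports "HOL-Analysis.Analysis"
begin

(* Points of the plane are complex numbers; angles are in degrees. *)

text \<open>Slope of the segment from u to v (u \<noteq> v), in degrees; defined modulo 360.
  The clockwise rotation about u bringing uv onto the positive x-axis is by the
  (counterclockwise) argument of v - u.\<close>
definition slope :: "complex \<Rightarrow> complex \<Rightarrow> real" where
  "slope u v = Arg (v - u) * 180 / pi"

definition theta_edge :: "real \<Rightarrow> complex \<Rightarrow> complex \<Rightarrow> bool" where
  "theta_edge \<theta> u v \<longleftrightarrow> u \<noteq> v \<and>
     (\<exists>m::int. \<theta> - 45 \<le> slope u v + 360 * m \<and> slope u v + 360 * m \<le> \<theta> + 45)"

definition theta_path :: "real \<Rightarrow> complex list \<Rightarrow> bool" where
  "theta_path \<theta> ps \<longleftrightarrow> ps \<noteq> [] \<and>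
     (\<forall>i. i + 1 < length ps \<longrightarrow> theta_edge \<theta> (ps ! i) (ps ! (i + 1)))"

definition path_point :: "complex list \<Rightarrow> real \<Rightarrow> complex" where
  "path_point ps s = (let i = nat \<lfloor>s\<rfloor> in
     if i + 1 < length ps then (1 - (s - real i)) *\<^sub>R ps ! i + (s - real i) *\<^sub>R ps ! (i + 1)
     else last ps)"

definition self_approaching :: "complex list \<Rightarrow> bool" where
  "self_approaching ps \<longleftrightarrow>
     (\<forall>s1 s2 s3. 0 \<le> s1 \<and> s1 < s2 \<and> s2 < s3 \<and> s3 \<le> real (length ps) - 1 \<longrightarrow>
        (let a = path_point ps s1; b = path_point ps s2; c = path_point ps s3 in
          a \<noteq> b \<and> b \<noteq> c \<and> a \<noteq> c \<longrightarrow> dist b c < dist a c))"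

definition increasing_chord :: "complex list \<Rightarrow> bool" where
  "increasing_chord ps \<longleftrightarrow> self_approaching ps \<and> self_approaching (rev ps)"

end

theory Submission
  imports Defs
begin

text \<open>Every edge of a \<open>\<theta>\<close>-path points into the quarter-plane cone \<open>C\<close> of directions within
  \<open>45\<degree>\<close> of \<open>\<theta>\<close>. Since \<open>C\<close> is a convex cone, for points \<open>a, b, c\<close> in this order along the
  path both \<open>b - a\<close> and \<open>c - b\<close> lie in \<open>C\<close>; any two vectors of \<open>C\<close> make an angle of at most
  \<open>90\<degree>\<close>, so \<open>|c - a|\<^sup>2 = |c - b|\<^sup>2 + |b - a|\<^sup>2 + 2 (c - b)\<cdot>(b - a) > |c - b|\<^sup>2\<close>.
  Traversing the path backwards replaces \<open>C\<close> by \<open>-C\<close>, which has the same properties.\<close>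

lemma dist_lt_if_inner_nonneg:
  fixes a b c :: "'a::real_inner"
  assumes "0 \<le> (c - b) \<bullet> (b - a)" "a \<noteq> b"
  shows "dist b c < dist a c"
proof -
  have "(norm (c - a))\<^sup>2 = (norm ((c - b) + (b - a)))\<^sup>2" by simp
  also have "\<dots> = (norm (c - b))\<^sup>2 + (norm (b - a))\<^sup>2 + 2 * ((c - b) \<bullet> (b - a))"
    by (simp add: dot_norm field_simps)
  moreover have "0 < (norm (b - a))\<^sup>2" using assms(2) by simp
  ultimately have "(norm (c - b))\<^sup>2 < (norm (c - a))\<^sup>2"
    using assms(1) by linarith
  then show ?thesis
    by (simp add: dist_norm norm_minus_commute power2_less_imp_less)
qed

lemma path_point_on_segment:
  assumes "i + 1 < length ps" "real i \<le> s" "s \<le> real i + 1"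
  shows "path_point ps s = (1 - (s - real i)) *\<^sub>R ps ! i + (s - real i) *\<^sub>R ps ! (i + 1)"
proof (cases "s < real i + 1")
  case True
  then have "nat \<lfloor>s\<rfloor> = i" using assms by linarith
  then show ?thesis using assms unfolding path_point_def by simp
next
  case False
  then have s: "s = real i + 1" using assms by simp
  then have "nat \<lfloor>s\<rfloor> = i + 1" by simp
  moreover have "last ps = ps ! (i + 1)" if "\<not> i + 2 < length ps"
  proof -
    have "length ps = i + 2" using that assms(1) by linarith
    then show ?thesis using last_conv_nth[of ps] by fastforce
  qed
  ultimately show ?thesis using assms s unfolding path_point_def by auto
qed

lemma path_point_diff_on_segment:
  assumes "i + 1 < length ps" "real i \<le> s" "s \<le> t" "t \<le> real i + 1"
  shows "path_point ps t - path_point ps s = (t - s) *\<^sub>R (ps ! (i + 1) - ps ! i)"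
  using assms
  by (simp add: path_point_on_segment algebra_simps)

lemma path_point_diff_mem_convex_cone:
  assumes C: "convex_cone C"
    and edges: "\<And>i. i + 1 < length ps \<Longrightarrow> ps ! (i + 1) - ps ! i \<in> C"
    and "0 \<le> s" "s \<le> t" "t \<le> real (length ps) - 1"
  shows "path_point ps t - path_point ps s \<in> C"
  using assms(3-)
proof (induction "nat (\<lfloor>t\<rfloor> - \<lfloor>s\<rfloor>)" arbitrary: s rule: less_induct)
  case less
  define i where "i = nat \<lfloor>s\<rfloor>"
  have i: "real i \<le> s" "s < real i + 1" using less.prems unfolding i_def by linarith+
  show ?case
  proof (cases "t \<le> real i + 1")
    case True
    show ?thesis
    proof (cases "i + 1 < length ps")
      case True
      have "(t - s) *\<^sub>R (ps ! (i + 1) - ps ! i) \<in> C"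
        using True less.prems by (intro convex_cone_scaleR[OF C] edges) auto
      with \<open>t \<le> real i + 1\<close> i less.prems True show ?thesis
        by (simp add: path_point_diff_on_segment)
    next
      case False
      then have "s = t" using less.prems i by linarith
      then show ?thesis by (simp add: convex_cone_contains_0[OF C])
    qed
  next
    case False
    define m where "m = real i + 1"
    have i_edge: "i + 1 < length ps" using False less.prems by linarith
    have "\<lfloor>m\<rfloor> = \<lfloor>s\<rfloor> + 1" using less.prems unfolding m_def i_def by simp
    moreover have "\<lfloor>m\<rfloor> \<le> \<lfloor>t\<rfloor>" using False unfolding m_def by (intro floor_mono) simp
    ultimately have "path_point ps t - path_point ps m \<in> C"
      using False less.prems by (intro less.hyps) (auto simp: m_def)
    moreover have "(m - s) *\<^sub>R (ps ! (i + 1) - ps ! i) \<in> C"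
      using i i_edge by (intro convex_cone_scaleR[OF C] edges) (auto simp: m_def)
    then have "path_point ps m - path_point ps s \<in> C"
      using i i_edge by (simp add: m_def path_point_diff_on_segment)
    ultimately have "(path_point ps t - path_point ps m) + (path_point ps m - path_point ps s) \<in> C"
      by (rule convex_cone_add[OF C])
    then show ?thesis by simp
  qed
qed

lemma self_approaching_if_edges_in_acute_cone:
  assumes C: "convex_cone C"
    and acute: "\<And>x y. x \<in> C \<Longrightarrow> y \<in> C \<Longrightarrow> 0 \<le> x \<bullet> y"
    and edges: "\<And>i. i + 1 < length ps \<Longrightarrow> ps ! (i + 1) - ps ! i \<in> C"
  shows "self_approaching ps"
  unfolding self_approaching_def Let_def
proof (intro allI impI)
  fix s1 s2 s3 :: real
  assume "0 \<le> s1 \<and> s1 < s2 \<and> s2 < s3 \<and> s3 \<le> real (length ps) - 1"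
    and "path_point ps s1 \<noteq> path_point ps s2 \<and> path_point ps s2 \<noteq> path_point ps s3
         \<and> path_point ps s1 \<noteq> path_point ps s3"
  moreover from this have
    "path_point ps s2 - path_point ps s1 \<in> C" "path_point ps s3 - path_point ps s2 \<in> C"
    by (auto intro!: path_point_diff_mem_convex_cone[OF C edges])
  ultimately show "dist (path_point ps s2) (path_point ps s3) < dist (path_point ps s1) (path_point ps s3)"
    by (intro dist_lt_if_inner_nonneg acute) auto
qed

lemma rev_edge:
  fixes ps :: "'a::ab_group_add list"
  assumes "i + j + 2 = length ps"
  shows "rev ps ! (i + 1) - rev ps ! i = - (ps ! (j + 1) - ps ! j)"
proof -
  have "length ps - Suc (i + 1) = j" "length ps - Suc i = j + 1" using assms by auto
  with assms show ?thesis by (simp add: rev_nth algebra_simps)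
qed

lemma self_approaching_rev_if_edges_in_acute_cone:
  assumes C: "convex_cone C"
    and acute: "\<And>x y. x \<in> C \<Longrightarrow> y \<in> C \<Longrightarrow> 0 \<le> x \<bullet> y"
    and edges: "\<And>i. i + 1 < length ps \<Longrightarrow> ps ! (i + 1) - ps ! i \<in> C"
  shows "self_approaching (rev ps)"
proof (rule self_approaching_if_edges_in_acute_cone)
  show "convex_cone (uminus ` C)" by (rule convex_cone_negations[OF C])
  show "0 \<le> x \<bullet> y" if "x \<in> uminus ` C" "y \<in> uminus ` C" for x y
    using that acute by auto
  show "rev ps ! (i + 1) - rev ps ! i \<in> uminus ` C" if "i + 1 < length (rev ps)" for i
  proof -
    define j where "j = length ps - 2 - i"
    have j: "i + j + 2 = length ps" using that unfolding j_def by auto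
    then have "j + 1 < length ps" by linarith
    then show ?thesis unfolding rev_edge[OF j] by (intro imageI edges)
  qed
qed

text \<open>For \<open>w \<noteq> 0\<close>, the directions making an angle of at most \<open>\<pi>/4\<close> with \<open>w\<close>.\<close>
definition quarter_cone :: "complex \<Rightarrow> complex set" where
  "quarter_cone w = {z. \<bar>Im (z * cnj w)\<bar> \<le> Re (z * cnj w)}"

lemma convex_cone_quarter_cone: "convex_cone (quarter_cone w)"
  unfolding convex_cone_iff
proof (intro conjI ballI allI impI)
  show "0 \<in> quarter_cone w" by (simp add: quarter_cone_def)
  show "x + y \<in> quarter_cone w" if "x \<in> quarter_cone w" "y \<in> quarter_cone w" for x y
    using that abs_triangle_ineq[of "Im (x * cnj w)" "Im (y * cnj w)"]
    by (simp add: quarter_cone_def distrib_right)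
  show "c *\<^sub>R x \<in> quarter_cone w" if "x \<in> quarter_cone w" "0 \<le> c" for x c
  proof -
    have "Im (c *\<^sub>R x * cnj w) = c * Im (x * cnj w)" "Re (c *\<^sub>R x * cnj w) = c * Re (x * cnj w)"
      by simp_all
    with that show ?thesis
      unfolding quarter_cone_def by (simp only: mem_Collect_eq abs_mult) (simp add: mult_left_mono)
  qed
qed

lemma inner_nonneg_if_mem_quarter_cone:
  assumes "a \<in> quarter_cone w" "b \<in> quarter_cone w" "w \<noteq> 0"
  shows "0 \<le> a \<bullet> b"
proof -
  define x1 where "x1 = Re (a * cnj w)"
  define y1 where "y1 = Im (a * cnj w)"
  define x2 where "x2 = Re (b * cnj w)"
  define y2 where "y2 = Im (b * cnj w)"
  have "\<bar>y1\<bar> \<le> x1" "\<bar>y2\<bar> \<le> x2"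
    using assms unfolding quarter_cone_def x1_def y1_def x2_def y2_def by auto
  then have "\<bar>y1\<bar> * \<bar>y2\<bar> \<le> x1 * x2" by (intro mult_mono) auto
  moreover have "- (y1 * y2) \<le> \<bar>y1\<bar> * \<bar>y2\<bar>" by (simp flip: abs_mult)
  moreover have "(a \<bullet> b) * (cmod w)\<^sup>2 = x1 * x2 + y1 * y2"
    unfolding x1_def y1_def x2_def y2_def inner_complex_def cmod_power2
    by (simp add: algebra_simps power2_eq_square)
  ultimately have "0 \<le> (a \<bullet> b) * (cmod w)\<^sup>2" by linarith
  with assms(3) show ?thesis by (simp add: zero_le_mult_iff)
qed

lemma abs_sin_le_cos:
  assumes "\<bar>x\<bar> \<le> pi / 4"
  shows "\<bar>sin x\<bar> \<le> cos x"
proof -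
  have "\<bar>sin x\<bar> = sin \<bar>x\<bar>"
    using assms sin_ge_zero[of "\<bar>x\<bar>"] by (cases "0 \<le> x") auto
  also have "\<dots> \<le> sin (pi / 2 - \<bar>x\<bar>)"
    using assms by (intro sin_monotone_2pi_le) auto
  also have "\<dots> = cos x"
    by (simp add: sin_cos_eq abs_if)
  finally show ?thesis .
qed

lemma rcis_mem_quarter_cone:
  assumes "0 \<le> r" "\<bar>\<phi> - \<alpha>\<bar> \<le> pi / 4"
  shows "rcis r \<phi> \<in> quarter_cone (cis \<alpha>)"
proof -
  have rotate: "rcis r \<phi> * cnj (cis \<alpha>) = rcis r (\<phi> - \<alpha>)"
    by (simp add: rcis_def cis_cnj cis_mult)
  have "\<bar>r * sin (\<phi> - \<alpha>)\<bar> \<le> r * cos (\<phi> - \<alpha>)"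
    using assms abs_sin_le_cos[of "\<phi> - \<alpha>"] by (simp add: abs_mult mult_left_mono)
  then show ?thesis
    unfolding quarter_cone_def by (simp only: mem_Collect_eq rotate Re_rcis Im_rcis)
qed

lemma theta_edge_mem_quarter_cone:
  assumes "theta_edge \<theta> u v"
  shows "v - u \<in> quarter_cone (cis (\<theta> * pi / 180))"
proof -
  obtain m :: int where "\<theta> - 45 \<le> slope u v + 360 * real_of_int m" "slope u v + 360 * real_of_int m \<le> \<theta> + 45"
    using assms unfolding theta_edge_def by blast
  then have m: "\<bar>slope u v + 360 * real_of_int m - \<theta>\<bar> \<le> 45" by linarith
  define \<phi> where "\<phi> = Arg (v - u) + 2 * pi * m"
  have "\<bar>\<phi> - \<theta> * pi / 180\<bar> = \<bar>slope u v + 360 * real_of_int m - \<theta>\<bar> * (pi / 180)"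
    unfolding \<phi>_def slope_def by (simp add: abs_mult_pos' field_simps)
  also have "\<dots> \<le> 45 * (pi / 180)"
    using m by (intro mult_right_mono) simp_all
  finally have "\<bar>\<phi> - \<theta> * pi / 180\<bar> \<le> pi / 4" by simp
  moreover have "rcis (cmod (v - u)) \<phi> = v - u"
    by (simp add: \<phi>_def rcis_def cis_mult[symmetric] rcis_cmod_Arg[unfolded rcis_def])
  ultimately show ?thesis
    by (metis norm_ge_zero rcis_mem_quarter_cone)
qed

theorem lemma3:
  fixes \<theta> :: real and ps :: "complex list"
  assumes "theta_path \<theta> ps"
  shows "self_approaching ps \<and> self_approaching (rev ps)"
proof -
  let ?C = "quarter_cone (cis (\<theta> * pi / 180))"
  have "0 \<le> x \<bullet> y" if "x \<in> ?C" "y \<in> ?C" for x y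
    using that by (simp add: inner_nonneg_if_mem_quarter_cone)
  moreover have "ps ! (i + 1) - ps ! i \<in> ?C" if "i + 1 < length ps" for i
    using assms that unfolding theta_path_def by (simp add: theta_edge_mem_quarter_cone)
  ultimately show ?thesis
    using convex_cone_quarter_cone
    by (blast intro: self_approaching_if_edges_in_acute_cone self_approaching_rev_if_edges_in_acute_cone)
qed

end
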